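(* Assume the standing setting below. Let $(H_1,Y_1),(H_2,Y_2)\in\mathscr Q$ and $w\in\mathbf F(U)$. If $w$ is a $\tau$-shortening word over both $(H_1,Y_1)$ and $(H_2,Y_2)$, then $(H_1,Y_1)=(H_2,Y_2)$.
   Context: Standing setting: $G$ acts by isometries on a $\delta$-hyperbolic geodesic space $X$ ($(x,z)_t\ge\min\{(x,y)_t,(y,z)_t\}-\delta$, $(x,y)_z=\frac12(|x-z|+|y-z|-|x-y|)$), $\alpha=200\delta$, $L_0,\Delta_0>0$. $U\subset G$ is $\alpha$-reduced at $p\in X$: $U\cap U^{-1}=\varnothing$ and for distinct $u_1,u_2\in U\sqcup U^{-1}$, $(u_1p,u_2p)_p<\frac12\min\{|u_1p-p|,|u_2p-p|\}-\alpha-50\delta$; and $0<L(U,p)=\max_{u\in U}|up-p|\le L_0$. For a loxodromic subgroup $H$ with two-point limit set $\{\xi,\eta\}$, $C_H$ is the open $20\delta$-neighbourhood of the union of all $10^3\delta$-local $(1,\delta)$-quasi-geodesics from $\xi$ to $\eta$. $\mathscr Q$ is a loxodromic moving family: a set of pairs $(H,C_H)$, $H$ loxodromic, invariant under $g\cdot(H,Y)=(gHg^{-1},gY)$, with $\Delta(\mathscr Q,X)=\sup\{\operatorname{diam}(Y_1^{+20\delta}\cap Y_2^{+20\delta}):(H_1,Y_1)\ne(H_2,Y_2)\}\le\Delta_0$. Let $\tau\ge\Delta_0+2L_0+223\delta$. For a reduced word $w\equiv u_1\cdots u_n$ over $U\sqcup U^{-1}$ put $x_0=p$, $x_i=u_1\cdots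 u_ip$, and for $(H,Y)\in\mathscr Q$ let $y_i\in Y$ be a projection of $x_i$ on $Y$ (a point with $|x_i-y_i|\le d(x_i,Y)+\delta$). $w$ is a $\tau$-shortening word over $(H,Y)$ if $|y_0-y_n|>\tau$, $|x_0-y_0|\le\frac12|u_1p-p|-\alpha$ and $|x_n-y_n|\le\frac12|u_np-p|-\alpha$. $\mathbf F(U)$ is the free group on $U$. *)

theory Defs
  imports "HOL-Analysis.Analysis" "HOL-Algebra.Group"
begin

definition gromov :: "'a::metric_space \<Rightarrow> 'a \<Rightarrow> 'a \<Rightarrow> real" where
  "gromov x y z = (dist x z + dist y z - dist x y) / 2"

definition gromov_hyperbolic :: "'a::metric_space set \<Rightarrow> real \<Rightarrow> bool" where
  "gromov_hyperbolic X \<delta> \<longleftrightarrow>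
     (\<forall>x\<in>X. \<forall>y\<in>X. \<forall>z\<in>X. \<forall>t\<in>X.
        gromov x z t \<ge> min (gromov x y t) (gromov y z t) - \<delta>)"

definition geodesic_space :: "'a::metric_space set \<Rightarrow> bool" where
  "geodesic_space X \<longleftrightarrow>
     (\<forall>x\<in>X. \<forall>y\<in>X. \<exists>\<gamma>::real \<Rightarrow> 'a.
        \<gamma> 0 = x \<and> \<gamma> (dist x y) = y \<and> \<gamma> ` {0..dist x y} \<subseteq> X \<and>
        (\<forall>s\<in>{0..dist x y}. \<forall>t\<in>{0..dist x y}. dist (\<gamma> s) (\<gamma> t) = \<bar>s - t\<bar>))"

text \<open>Closed r-neighbourhood Y^{+r} = {x. d(x,Y) \<le> r} (empty if Y is empty).\<close>
definition nbhd :: "real \<Rightarrow> 'a::metric_space set \<Rightarrow> 'a set" where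
  "nbhd r Y = {x. \<forall>\<epsilon>>0. \<exists>y\<in>Y. dist x y < r + \<epsilon>}"

definition conv_infty :: "(nat \<Rightarrow> 'a::metric_space) \<Rightarrow> bool" where
  "conv_infty x \<longleftrightarrow> (\<forall>b M. \<exists>N. \<forall>n\<ge>N. \<forall>m\<ge>N. M \<le> gromov (x n) (x m) b)"

definition seq_rel :: "(nat \<Rightarrow> 'a::metric_space) \<Rightarrow> (nat \<Rightarrow> 'a) \<Rightarrow> bool" where
  "seq_rel x y \<longleftrightarrow> (\<forall>b M. \<exists>N. \<forall>n\<ge>N. \<forall>m\<ge>N. M \<le> gromov (x n) (y m) b)"

definition gromov_boundary :: "(nat \<Rightarrow> 'a::metric_space) set set" where
  "gromov_boundary = {{y. conv_infty y \<and> seq_rel x y} | x. conv_infty x}"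

definition tends_bdry_top :: "(real \<Rightarrow> 'a::metric_space) \<Rightarrow> (nat \<Rightarrow> 'a) set \<Rightarrow> bool" where
  "tends_bdry_top \<gamma> \<eta> \<longleftrightarrow>
     (\<forall>t::nat \<Rightarrow> real. filterlim t at_top sequentially \<longrightarrow> (\<lambda>n. \<gamma> (t n)) \<in> \<eta>)"

definition tends_bdry_bot :: "(real \<Rightarrow> 'a::metric_space) \<Rightarrow> (nat \<Rightarrow> 'a) set \<Rightarrow> bool" where
  "tends_bdry_bot \<gamma> \<xi> \<longleftrightarrow>
     (\<forall>t::nat \<Rightarrow> real. filterlim t at_bot sequentially \<longrightarrow> (\<lambda>n. \<gamma> (t n)) \<in> \<xi>)"

definition partition_sums :: "(real \<Rightarrow> 'a::metric_space) \<Rightarrow> real \<Rightarrow> real \<Rightarrow> real set" where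
  "partition_sums \<gamma> a b =
     {(\<Sum>i<n. dist (\<gamma> (t i)) (\<gamma> (t (Suc i)))) | n t.
        t 0 = a \<and> t n = b \<and> (\<forall>i<n. t i \<le> t (Suc i))}"

text \<open>Rectifiable, parametrized by arc length: length of the restriction to [s,s'] is s'-s.\<close>
definition arclength_param :: "(real \<Rightarrow> 'a::metric_space) \<Rightarrow> bool" where
  "arclength_param \<gamma> \<longleftrightarrow>
     (\<forall>s s'. s \<le> s' \<longrightarrow>
        (\<forall>v\<in>partition_sums \<gamma> s s'. v \<le> s' - s) \<and> Sup (partition_sums \<gamma> s s') = s' - s)"

definition local_qgeod :: "real \<Rightarrow> real \<Rightarrow> real \<Rightarrow> (real \<Rightarrow> 'a::metric_space) \<Rightarrow> bool" where
  "local_qgeod L k l \<gamma> \<longleftrightarrow> arclength_param \<gamma> \<and>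
     (\<forall>s s'. s \<le> s' \<longrightarrow> s' - s \<le> L \<longrightarrow> s' - s \<le> k * dist (\<gamma> s) (\<gamma> s') + l)"

definition isometric_action :: "('g, 'b) monoid_scheme \<Rightarrow> ('g \<Rightarrow> 'a::metric_space \<Rightarrow> 'a) \<Rightarrow> bool" where
  "isometric_action G act \<longleftrightarrow> group G \<and>
     (\<forall>g\<in>carrier G. \<forall>x y. dist (act g x) (act g y) = dist x y) \<and>
     (\<forall>x. act \<one>\<^bsub>G\<^esub> x = x) \<and>
     (\<forall>g\<in>carrier G. \<forall>h\<in>carrier G. \<forall>x. act (g \<otimes>\<^bsub>G\<^esub> h) x = act g (act h x))"

definition limit_set :: "('g \<Rightarrow> 'a::metric_space \<Rightarrow> 'a) \<Rightarrow> 'g set \<Rightarrow> (nat \<Rightarrow> 'a) set set" where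
  "limit_set act H = {\<xi> \<in> gromov_boundary. \<exists>x (h::nat \<Rightarrow> 'g). (\<forall>n. h n \<in> H) \<and> (\<lambda>n. act (h n) x) \<in> \<xi>}"

definition loxodromic_subgroup :: "('g, 'b) monoid_scheme \<Rightarrow> ('g \<Rightarrow> 'a::metric_space \<Rightarrow> 'a) \<Rightarrow> 'g set \<Rightarrow> bool" where
  "loxodromic_subgroup G act H \<longleftrightarrow> subgroup H G \<and> card (limit_set act H) = 2"

definition C_H :: "('g \<Rightarrow> 'a::metric_space \<Rightarrow> 'a) \<Rightarrow> real \<Rightarrow> 'g set \<Rightarrow> 'a set" where
  "C_H act \<delta> H = {x. \<exists>\<xi> \<eta> (\<gamma>::real \<Rightarrow> 'a). limit_set act H = {\<xi>, \<eta>} \<and> \<xi> \<noteq> \<eta> \<and>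
      local_qgeod (1000 * \<delta>) 1 \<delta> \<gamma> \<and> tends_bdry_bot \<gamma> \<xi> \<and> tends_bdry_top \<gamma> \<eta> \<and>
      (\<exists>t. dist x (\<gamma> t) < 20 * \<delta>)}"

definition conjugate :: "('g, 'b) monoid_scheme \<Rightarrow> 'g \<Rightarrow> 'g set \<Rightarrow> 'g set" where
  "conjugate G g H = (\<lambda>h. g \<otimes>\<^bsub>G\<^esub> h \<otimes>\<^bsub>G\<^esub> inv\<^bsub>G\<^esub> g) ` H"

definition loxodromic_moving_family ::
  "('g, 'b) monoid_scheme \<Rightarrow> ('g \<Rightarrow> 'a::metric_space \<Rightarrow> 'a) \<Rightarrow> real \<Rightarrow> real \<Rightarrow> ('g set \<times> 'a set) set \<Rightarrow> bool" where
  "loxodromic_moving_family G act \<delta> \<Delta>0 Q \<longleftrightarrow>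
     (\<forall>(H, Y)\<in>Q. loxodromic_subgroup G act H \<and> Y = C_H act \<delta> H) \<and>
     (\<forall>(H, Y)\<in>Q. \<forall>g\<in>carrier G. (conjugate G g H, act g ` Y) \<in> Q) \<and>
     (\<forall>(H1, Y1)\<in>Q. \<forall>(H2, Y2)\<in>Q. (H1, Y1) \<noteq> (H2, Y2) \<longrightarrow>
        (\<forall>x\<in>nbhd (20 * \<delta>) Y1 \<inter> nbhd (20 * \<delta>) Y2.
           \<forall>y\<in>nbhd (20 * \<delta>) Y1 \<inter> nbhd (20 * \<delta>) Y2. dist x y \<le> \<Delta>0))"

definition alpha_reduced ::
  "('g, 'b) monoid_scheme \<Rightarrow> ('g \<Rightarrow> 'a::metric_space \<Rightarrow> 'a) \<Rightarrow> real \<Rightarrow> real \<Rightarrow> 'g set \<Rightarrow> 'a \<Rightarrow> bool" where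
  "alpha_reduced G act \<delta> \<alpha> U p \<longleftrightarrow> U \<subseteq> carrier G \<and> U \<inter> (m_inv G) ` U = {} \<and>
     (\<forall>u1\<in>U \<union> (m_inv G) ` U. \<forall>u2\<in>U \<union> (m_inv G) ` U. u1 \<noteq> u2 \<longrightarrow>
        gromov (act u1 p) (act u2 p) p
          < min (dist (act u1 p) p) (dist (act u2 p) p) / 2 - \<alpha> - 50 * \<delta>)"

text \<open>Reduced words over U \<squnion> U^{-1}, i.e. elements of the free group F(U).\<close>
definition reduced_word :: "('g, 'b) monoid_scheme \<Rightarrow> 'g set \<Rightarrow> 'g list \<Rightarrow> bool" where
  "reduced_word G U ws \<longleftrightarrow> set ws \<subseteq> U \<union> (m_inv G) ` U \<and>
     (\<forall>i. Suc i < length ws \<longrightarrow> ws ! Suc i \<noteq> inv\<^bsub>G\<^esub> (ws ! i))"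

definition word_elem :: "('g, 'b) monoid_scheme \<Rightarrow> 'g list \<Rightarrow> 'g" where
  "word_elem G ws = foldr (\<lambda>u acc. u \<otimes>\<^bsub>G\<^esub> acc) ws \<one>\<^bsub>G\<^esub>"

definition is_projection :: "real \<Rightarrow> 'a::metric_space \<Rightarrow> 'a set \<Rightarrow> 'a \<Rightarrow> bool" where
  "is_projection \<delta> x Y y \<longleftrightarrow> y \<in> Y \<and> dist x y \<le> infdist x Y + \<delta>"

definition shortening_word ::
  "('g, 'b) monoid_scheme \<Rightarrow> ('g \<Rightarrow> 'a::metric_space \<Rightarrow> 'a) \<Rightarrow> real \<Rightarrow> real \<Rightarrow> real \<Rightarrow> 'a \<Rightarrow> 'g list \<Rightarrow> 'a set \<Rightarrow> bool" where
  "shortening_word G act \<delta> \<alpha> \<tau> p ws Y \<longleftrightarrow> ws \<noteq> [] \<and>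
     (\<exists>y0 yn. is_projection \<delta> p Y y0 \<and> is_projection \<delta> (act (word_elem G ws) p) Y yn \<and>
        dist y0 yn > \<tau> \<and>
        dist p y0 \<le> dist (act (hd ws) p) p / 2 - \<alpha> \<and>
        dist (act (word_elem G ws) p) yn \<le> dist (act (last ws) p) p / 2 - \<alpha>)"

end

theory Submission
  imports Defs
begin

text \<open>The projections of \<open>p\<close> and of \<open>w p\<close> onto \<open>Y\<^sub>1\<close> and onto \<open>Y\<^sub>2\<close> lie within \<open>L\<^sub>0/2\<close> of
  \<open>p\<close> and of \<open>w p\<close> respectively, while the two projections onto \<open>Y\<^sub>1\<close> are more than \<open>\<tau>\<close> apart.
  By the local-to-global principle for \<open>10\<^sup>3\<delta>\<close>-local quasi-geodesics, any two axes of the same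
  loxodromic subgroup fellow-travel within \<open>23\<delta>/2\<close>, so each \<open>C\<^sub>H\<close> lies within \<open>63\<delta>/2\<close> of any
  single axis. An axis \<open>\<gamma>\<^sub>1\<close> of \<open>H\<^sub>1\<close> therefore has two points, more than \<open>2L\<^sub>0\<close> apart, each
  within \<open>L\<^sub>0\<close> of an axis \<open>\<gamma>\<^sub>2\<close> of \<open>H\<^sub>2\<close>; thinness of quadrilaterals puts the points of \<open>\<gamma>\<^sub>1\<close> at
  distance \<open>L\<^sub>0 - 50\<delta>\<close> from either end within \<open>23\<delta>/2\<close> of \<open>\<gamma>\<^sub>2\<close>. Both lie in
  \<open>Y\<^sub>1 \<inter> Y\<^sub>2\<close> and are more than \<open>\<Delta>\<^sub>0\<close> apart, which the moving family forbids unless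
  \<open>(H\<^sub>1, Y\<^sub>1) = (H\<^sub>2, Y\<^sub>2)\<close>.\<close>

lemma gromov_commute: "gromov x y z = gromov y x z"
  unfolding gromov_def by (simp add: dist_commute)

lemma gromov_nonneg: "0 \<le> gromov x y z"
  unfolding gromov_def using dist_triangle[of x y z] by (simp add: dist_commute)

lemma dist_diff_le_gromov: "dist x z - dist x y \<le> gromov x y z"
  unfolding gromov_def using dist_triangle[of x z y] by (simp add: dist_commute)

lemma gromov_add_gromov: "gromov x y z + gromov y z x = dist x z"
  unfolding gromov_def by (simp add: dist_commute field_simps)

lemma gromov_hyperbolicD:
  assumes "gromov_hyperbolic (UNIV :: 'a::metric_space set) \<delta>"
  shows "min (gromov x y t) (gromov y z t) - \<delta> \<le> gromov (x :: 'a) z t"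
  using assms unfolding gromov_hyperbolic_def by auto

lemma gromov_hyperbolic_delta_nonneg:
  assumes "gromov_hyperbolic (UNIV :: 'a::metric_space set) \<delta>"
  shows "0 \<le> \<delta>"
  using gromov_hyperbolicD[OF assms, of x x x x] unfolding gromov_def by simp

lemma gromov_hyperbolic_transfer:
  assumes "gromov_hyperbolic (UNIV :: 'a::metric_space set) \<delta>"
    and "gromov x z t \<le> c" and "c + \<delta> < gromov x y t"
  shows "gromov y z (t :: 'a) \<le> c + \<delta>"
  using gromov_hyperbolicD[OF assms(1), of x y t z] assms(2,3) by (auto simp: min_def split: if_splits)

lemma gromov_hyperbolic_dist_tripod:
  fixes x y z w :: "'a::metric_space"
  assumes H: "gromov_hyperbolic (UNIV :: 'a set) \<delta>"
    and "dist x w = gromov z y x"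
  shows "dist z w \<le> gromov x y z + 2 * gromov x y w + 2 * \<delta>"
proof -
  have "min (gromov z y x) (gromov y w x) - \<delta> \<le> gromov z w x"
    by (rule gromov_hyperbolicD[OF H])
  moreover have "gromov y w x + gromov x y w = dist x w"
    using gromov_add_gromov[of w y x] by (simp add: gromov_commute dist_commute)
  moreover have "gromov z y x + gromov x y z = dist z x"
    using gromov_add_gromov[of z y x] by (simp add: gromov_commute)
  moreover have "dist z w = dist z x + dist x w - 2 * gromov z w x"
    by (simp add: gromov_def dist_commute field_simps)
  moreover have "gromov z y x - gromov x y w \<le> min (gromov z y x) (gromov y w x)"
    using calculation(2) assms(2) gromov_nonneg[of x y w] by simp
  ultimately show ?thesis
    using assms(2) by linarith
qed

lemma chain_gromov_forward:
  fixes x :: "nat \<Rightarrow> 'a::metric_space"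
  assumes H: "gromov_hyperbolic (UNIV :: 'a set) \<delta>" and "0 \<le> \<epsilon>" and "2 * \<epsilon> + 2 * \<delta> < D"
    and local_small: "\<And>i. Suc i < n \<Longrightarrow> gromov (x i) (x (Suc (Suc i))) (x (Suc i)) \<le> \<epsilon>"
    and step_long: "\<And>i. i < n \<Longrightarrow> D \<le> dist (x i) (x (Suc i))"
  shows "k < n \<Longrightarrow> gromov (x 0) (x (Suc k)) (x k) \<le> \<epsilon> + \<delta>"
proof (induction k)
  case 0
  then show ?case
    using assms(2) gromov_hyperbolic_delta_nonneg[OF H] by (simp add: gromov_def dist_commute)
next
  case (Suc k)
  have "gromov (x k) (x 0) (x (Suc k)) + gromov (x 0) (x (Suc k)) (x k) = dist (x k) (x (Suc k))"
    by (rule gromov_add_gromov)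
  then have "\<epsilon> + \<delta> < gromov (x k) (x 0) (x (Suc k))"
    using Suc step_long[of k] assms(3) by simp
  then show ?case
    using gromov_hyperbolic_transfer[OF H local_small] Suc by simp
qed

lemma chain_gromov_backward:
  fixes x :: "nat \<Rightarrow> 'a::metric_space"
  assumes H: "gromov_hyperbolic (UNIV :: 'a set) \<delta>" and "0 \<le> \<epsilon>" and "2 * \<epsilon> + 2 * \<delta> < D"
    and local_small: "\<And>i. Suc i < n \<Longrightarrow> gromov (x i) (x (Suc (Suc i))) (x (Suc i)) \<le> \<epsilon>"
    and step_long: "\<And>i. i < n \<Longrightarrow> D \<le> dist (x i) (x (Suc i))"
    and "k < n"
  shows "gromov (x n) (x k) (x (Suc k)) \<le> \<epsilon> + \<delta>"
proof -
  define y where "y i = x (n - i)" for i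
  have "gromov (y i) (y (Suc (Suc i))) (y (Suc i)) \<le> \<epsilon>" if "Suc i < n" for i
    using local_small[of "n - Suc (Suc i)"] that
    by (simp add: y_def gromov_commute Suc_diff_Suc)
  moreover have "D \<le> dist (y i) (y (Suc i))" if "i < n" for i
    using step_long[of "n - Suc i"] that by (simp add: y_def dist_commute Suc_diff_Suc)
  ultimately have "gromov (y 0) (y (Suc (n - Suc k))) (y (n - Suc k)) \<le> \<epsilon> + \<delta>"
    using chain_gromov_forward[where x = y and n = n, OF H assms(2,3)] \<open>k < n\<close> by simp
  then show ?thesis
    using \<open>k < n\<close> by (simp add: y_def Suc_diff_Suc)
qed

lemma chain_gromov_interior:
  fixes x :: "nat \<Rightarrow> 'a::metric_space"
  assumes H: "gromov_hyperbolic (UNIV :: 'a set) \<delta>" and "0 \<le> \<epsilon>" and "2 * \<epsilon> + 3 * \<delta> < D"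
    and local_small: "\<And>i. Suc i < n \<Longrightarrow> gromov (x i) (x (Suc (Suc i))) (x (Suc i)) \<le> \<epsilon>"
    and step_long: "\<And>i. i < n \<Longrightarrow> D \<le> dist (x i) (x (Suc i))"
    and "k < n"
  shows "gromov (x 0) (x n) (x k) \<le> \<epsilon> + 2 * \<delta>"
proof -
  have D: "2 * \<epsilon> + 2 * \<delta> < D"
    using assms(3) gromov_hyperbolic_delta_nonneg[OF H] by simp
  have forward: "gromov (x (Suc k)) (x 0) (x k) \<le> \<epsilon> + \<delta>"
    using chain_gromov_forward[where x = x and n = n, OF H assms(2) D local_small step_long \<open>k < n\<close>]
    by (simp add: gromov_commute)
  have "gromov (x k) (x n) (x (Suc k)) + gromov (x n) (x (Suc k)) (x k) = dist (x k) (x (Suc k))"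
    by (rule gromov_add_gromov)
  moreover have "gromov (x n) (x k) (x (Suc k)) \<le> \<epsilon> + \<delta>"
    using chain_gromov_backward[where x = x and n = n, OF H assms(2) D local_small step_long \<open>k < n\<close>] .
  ultimately have "\<epsilon> + \<delta> + \<delta> < gromov (x (Suc k)) (x n) (x k)"
    using step_long[OF \<open>k < n\<close>] assms(3) gromov_commute[of "x k" "x n" "x (Suc k)"]
      gromov_commute[of "x n" "x (Suc k)" "x k"] by linarith
  then have "gromov (x n) (x 0) (x k) \<le> \<epsilon> + 2 * \<delta>"
    using gromov_hyperbolic_transfer[OF H forward, of "x n"] by linarith
  then show ?thesis
    by (simp add: gromov_commute)
qed

lemma local_qgeod_dist_le:
  assumes "local_qgeod L k l \<gamma>"
  shows "dist (\<gamma> s) (\<gamma> s') \<le> \<bar>s - s'\<bar>"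
proof -
  have "dist (\<gamma> s) (\<gamma> s') \<le> s' - s" if "s \<le> s'" for s s'
  proof -
    let ?t = "\<lambda>i::nat. if i = 0 then s else s'"
    have "dist (\<gamma> s) (\<gamma> s') \<in> partition_sums \<gamma> s s'"
      unfolding partition_sums_def
    proof (intro CollectI exI conjI)
      show "dist (\<gamma> s) (\<gamma> s') = (\<Sum>i<1. dist (\<gamma> (?t i)) (\<gamma> (?t (Suc i))))"
        by simp
    qed (use that in auto)
    then show ?thesis
      using assms that unfolding local_qgeod_def arclength_param_def by blast
  qed
  from this[of s s'] this[of s' s] show ?thesis
    by (cases "s \<le> s'") (auto simp: dist_commute)
qed

lemma local_qgeod_continuous_on: "local_qgeod L k l \<gamma> \<Longrightarrow> continuous_on S \<gamma>"
  by (rule lipschitz_on_continuous_on[where L = 1], rule lipschitz_onI)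
     (auto simp: local_qgeod_dist_le dist_real_def)

lemma exists_subdivision:
  fixes l \<delta> :: real
  assumes "0 < \<delta>" and "250 * \<delta> \<le> l"
  obtains k :: nat where "1 \<le> k" and "250 * \<delta> \<le> l / k" and "l / k \<le> 500 * \<delta>"
proof
  define k where "k = nat \<lceil>l / (500 * \<delta>)\<rceil>"
  have pos: "0 < l / (500 * \<delta>)"
    using assms by simp
  show k1: "1 \<le> k"
    unfolding k_def using pos by linarith
  have k_ge: "l / (500 * \<delta>) \<le> k" and k_less: "k < l / (500 * \<delta>) + 1"
    unfolding k_def using pos by linarith+
  then show "l / k \<le> 500 * \<delta>"
    using k1 assms(1) by (simp add: field_simps)
  have "250 * \<delta> * k \<le> l"
  proof (cases "k = 1")
    case False
    then have "real k \<le> 2 * (real k - 1)"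
      using k1 by simp
    then have "250 * \<delta> * k \<le> 250 * \<delta> * (2 * (real k - 1))"
      using assms(1) by (intro mult_left_mono) auto
    moreover have "500 * \<delta> * (real k - 1) < l"
      using k_less assms(1) by (simp add: field_simps)
    ultimately show ?thesis
      by (simp add: algebra_simps)
  qed (use assms in simp)
  then show "250 * \<delta> \<le> l / k"
    using k1 by (simp add: field_simps)
qed

lemma local_qgeod_sample_gromov_le:
  fixes \<gamma> :: "real \<Rightarrow> 'a::metric_space"
  assumes H: "gromov_hyperbolic (UNIV :: 'a set) \<delta>" and "0 < \<delta>"
    and Q: "local_qgeod (1000 * \<delta>) 1 \<delta> \<gamma>"
    and steps: "\<And>i. i < n \<Longrightarrow> 250 * \<delta> \<le> \<tau> (Suc i) - \<tau> i \<and> \<tau> (Suc i) - \<tau> i \<le> 500 * \<delta>"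
    and "k < n"
  shows "gromov (\<gamma> (\<tau> 0)) (\<gamma> (\<tau> n)) (\<gamma> (\<tau> k)) \<le> 5 / 2 * \<delta>"
proof -
  define x where "x i = \<gamma> (\<tau> i)" for i
  have local_dist: "\<tau> j - \<tau> i \<le> dist (x i) (x j) + \<delta>" if "\<tau> i \<le> \<tau> j" "\<tau> j - \<tau> i \<le> 1000 * \<delta>" for i j
    using Q that unfolding local_qgeod_def x_def by simp
  have step_dist: "dist (x i) (x (Suc i)) \<le> \<tau> (Suc i) - \<tau> i" if "i < n" for i
    using local_qgeod_dist_le[OF Q, of "\<tau> i" "\<tau> (Suc i)"] steps[OF that] \<open>0 < \<delta>\<close>
    unfolding x_def by simp
  have "gromov (x i) (x (Suc (Suc i))) (x (Suc i)) \<le> \<delta> / 2" if "Suc i < n" for i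
    using local_dist[of i "Suc (Suc i)"] step_dist[of i] step_dist[of "Suc i"]
      steps[of i] steps[of "Suc i"] that \<open>0 < \<delta>\<close>
    unfolding gromov_def by (simp add: dist_commute)
  moreover have "249 * \<delta> \<le> dist (x i) (x (Suc i))" if "i < n" for i
    using local_dist[of i "Suc i"] steps[OF that] \<open>0 < \<delta>\<close> by simp
  ultimately have "gromov (x 0) (x n) (x k) \<le> \<delta> / 2 + 2 * \<delta>"
    using \<open>0 < \<delta>\<close> by (intro chain_gromov_interior[OF H _ _ _ _ \<open>k < n\<close>]) auto
  then show ?thesis
    unfolding x_def by simp
qed

lemma local_qgeod_gromov_le_ordered:
  fixes \<gamma> :: "real \<Rightarrow> 'a::metric_space"
  assumes H: "gromov_hyperbolic (UNIV :: 'a set) \<delta>" and "0 < \<delta>"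
    and Q: "local_qgeod (1000 * \<delta>) 1 \<delta> \<gamma>"
    and "250 * \<delta> \<le> t - s" and "250 * \<delta> \<le> u - t"
  shows "gromov (\<gamma> s) (\<gamma> u) (\<gamma> t) \<le> 5 / 2 * \<delta>"
proof -
  obtain k :: nat where k: "1 \<le> k" "250 * \<delta> \<le> (t - s) / k" "(t - s) / k \<le> 500 * \<delta>"
    using exists_subdivision[OF \<open>0 < \<delta>\<close> assms(4)] by blast
  obtain m :: nat where m: "1 \<le> m" "250 * \<delta> \<le> (u - t) / m" "(u - t) / m \<le> 500 * \<delta>"
    using exists_subdivision[OF \<open>0 < \<delta>\<close> assms(5)] by blast
  define \<tau> where "\<tau> i = (if i \<le> k then s + i * ((t - s) / k) else t + (i - k) * ((u - t) / m))" for i :: nat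
  have "\<tau> (Suc i) - \<tau> i = (if i < k then (t - s) / k else (u - t) / m)" for i
  proof -
    consider "i < k" | "i = k" | "k < i"
      by linarith
    moreover have "real k \<noteq> 0" "real m \<noteq> 0"
      using k(1) m(1) by auto
    ultimately show ?thesis
      by cases (auto simp: \<tau>_def field_simps)
  qed
  then have "250 * \<delta> \<le> \<tau> (Suc i) - \<tau> i \<and> \<tau> (Suc i) - \<tau> i \<le> 500 * \<delta>" for i
    using k m by simp
  then have "gromov (\<gamma> (\<tau> 0)) (\<gamma> (\<tau> (k + m))) (\<gamma> (\<tau> k)) \<le> 5 / 2 * \<delta>"
    using m(1) by (intro local_qgeod_sample_gromov_le[OF H \<open>0 < \<delta>\<close> Q]) auto
  moreover have "\<tau> 0 = s" "\<tau> k = t" "\<tau> (k + m) = u"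
    using k(1) m(1) by (auto simp: \<tau>_def)
  ultimately show ?thesis
    by simp
qed

lemma local_qgeod_gromov_le:
  fixes \<gamma> :: "real \<Rightarrow> 'a::metric_space"
  assumes H: "gromov_hyperbolic (UNIV :: 'a set) \<delta>" and "0 < \<delta>"
    and Q: "local_qgeod (1000 * \<delta>) 1 \<delta> \<gamma>"
    and "min a b \<le> t" "t \<le> max a b"
    and "250 * \<delta> \<le> \<bar>t - a\<bar>" "250 * \<delta> \<le> \<bar>b - t\<bar>"
  shows "gromov (\<gamma> a) (\<gamma> b) (\<gamma> t) \<le> 5 / 2 * \<delta>"
proof (cases "a \<le> b")
  case True
  then have "250 * \<delta> \<le> t - a" "250 * \<delta> \<le> b - t"
    using assms(4-7) \<open>0 < \<delta>\<close> by auto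
  then show ?thesis
    by (rule local_qgeod_gromov_le_ordered[OF H \<open>0 < \<delta>\<close> Q])
next
  case False
  then have "250 * \<delta> \<le> t - b" "250 * \<delta> \<le> a - t"
    using assms(4-7) \<open>0 < \<delta>\<close> by auto
  then show ?thesis
    using local_qgeod_gromov_le_ordered[OF H \<open>0 < \<delta>\<close> Q] by (metis gromov_commute)
qed

lemma curve_dist_ivt:
  fixes \<gamma> :: "real \<Rightarrow> 'a::metric_space"
  assumes "continuous_on UNIV \<gamma>" and "0 \<le> r" and "r \<le> dist (\<gamma> a) (\<gamma> b)"
  obtains t where "min a b \<le> t" "t \<le> max a b" "dist (\<gamma> a) (\<gamma> t) = r"
proof -
  define f where "f t = dist (\<gamma> a) (\<gamma> t)" for t
  have cont: "continuous_on S f" for S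
    unfolding f_def using assms(1)
    by (intro continuous_on_dist continuous_on_const) (auto intro: continuous_on_subset)
  have "f a \<le> r" "r \<le> f b"
    using assms(2,3) by (auto simp: f_def)
  then have "\<exists>t. min a b \<le> t \<and> t \<le> max a b \<and> f t = r"
    using IVT'[of f a r b, OF _ _ _ cont] IVT2'[of f a r b, OF _ _ _ cont]
    by (cases "a \<le> b") (auto simp: min_def max_def)
  then show ?thesis
    using that unfolding f_def by blast
qed

lemma local_qgeod_near_point:
  fixes \<gamma> :: "real \<Rightarrow> 'a::metric_space"
  assumes H: "gromov_hyperbolic (UNIV :: 'a set) \<delta>" and "0 < \<delta>"
    and Q: "local_qgeod (1000 * \<delta>) 1 \<delta> \<gamma>"
    and small: "gromov (\<gamma> a) (\<gamma> b) z \<le> c"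
    and far_a: "c + 250 * \<delta> \<le> dist (\<gamma> a) z" and far_b: "c + 250 * \<delta> \<le> dist (\<gamma> b) z"
  shows "\<exists>t. dist z (\<gamma> t) \<le> c + 7 * \<delta>"
proof -
  define r where "r = gromov z (\<gamma> b) (\<gamma> a)"
  have r_far: "250 * \<delta> \<le> r"
    using gromov_add_gromov[of "\<gamma> a" "\<gamma> b" z] small far_a
    by (simp add: r_def gromov_commute dist_commute)
  have b_far: "250 * \<delta> \<le> gromov z (\<gamma> a) (\<gamma> b)"
    using gromov_add_gromov[of "\<gamma> b" "\<gamma> a" z] small far_b
    by (simp add: gromov_commute dist_commute)
  have "r \<le> dist (\<gamma> a) (\<gamma> b)"
    using gromov_add_gromov[of "\<gamma> a" z "\<gamma> b"] gromov_nonneg[of z "\<gamma> a" "\<gamma> b"]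
    by (simp add: r_def gromov_commute)
  moreover have "0 \<le> r"
    using r_far \<open>0 < \<delta>\<close> by simp
  ultimately obtain t where t: "min a b \<le> t" "t \<le> max a b" "dist (\<gamma> a) (\<gamma> t) = r"
    using curve_dist_ivt[OF local_qgeod_continuous_on[OF Q]] by blast
  \<comment> \<open>\<gamma> t plays the role of the centre of the tripod spanned by \<gamma> a, \<gamma> b and z.\<close>
  have "250 * \<delta> \<le> \<bar>t - a\<bar>"
    using local_qgeod_dist_le[OF Q, of a t] t(3) r_far by simp
  moreover have "250 * \<delta> \<le> \<bar>b - t\<bar>"
    using local_qgeod_dist_le[OF Q, of t b] dist_triangle[of "\<gamma> a" "\<gamma> b" "\<gamma> t"] t(3) b_far
      gromov_add_gromov[of "\<gamma> a" z "\<gamma> b"]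
    by (simp add: r_def gromov_commute dist_commute)
  ultimately have "gromov (\<gamma> a) (\<gamma> b) (\<gamma> t) \<le> 5 / 2 * \<delta>"
    using local_qgeod_gromov_le[OF H \<open>0 < \<delta>\<close> Q t(1,2)] by blast
  then have "dist z (\<gamma> t) \<le> c + 7 * \<delta>"
    using gromov_hyperbolic_dist_tripod[OF H, of "\<gamma> a" "\<gamma> t" z "\<gamma> b"] t(3) small
    unfolding r_def by linarith
  then show ?thesis
    by blast
qed

lemma local_qgeod_fellow_travel:
  fixes \<gamma>1 \<gamma>2 :: "real \<Rightarrow> 'a::metric_space"
  assumes H: "gromov_hyperbolic (UNIV :: 'a set) \<delta>" and "0 < \<delta>"
    and Q1: "local_qgeod (1000 * \<delta>) 1 \<delta> \<gamma>1" and Q2: "local_qgeod (1000 * \<delta>) 1 \<delta> \<gamma>2"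
    and near_a: "dist (\<gamma>1 a) (\<gamma>2 c) \<le> L - 337 * \<delta>" and near_b: "dist (\<gamma>1 b) (\<gamma>2 e) \<le> L - 337 * \<delta>"
    and long: "2 * L \<le> dist (\<gamma>1 a) (\<gamma>1 b)" and "400 * \<delta> \<le> L"
  obtains t1 t where "dist (\<gamma>1 a) (\<gamma>1 t1) = L - 50 * \<delta>" and "dist (\<gamma>1 t1) (\<gamma>2 t) \<le> 23 / 2 * \<delta>"
proof -
  obtain t1 where t1: "min a b \<le> t1" "t1 \<le> max a b" "dist (\<gamma>1 a) (\<gamma>1 t1) = L - 50 * \<delta>"
    using curve_dist_ivt[OF local_qgeod_continuous_on[OF Q1], of "L - 50 * \<delta>" a b]
      long \<open>400 * \<delta> \<le> L\<close> \<open>0 < \<delta>\<close> by auto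
  define w where "w = \<gamma>1 t1"
  have far_b: "L + 50 * \<delta> \<le> dist (\<gamma>1 b) w"
    using dist_triangle[of "\<gamma>1 a" "\<gamma>1 b" w] t1(3) long by (simp add: w_def dist_commute)
  have "gromov (\<gamma>1 a) (\<gamma>1 b) w \<le> 5 / 2 * \<delta>"
    unfolding w_def using local_qgeod_dist_le[OF Q1, of a t1] local_qgeod_dist_le[OF Q1, of b t1]
      t1(3) far_b \<open>400 * \<delta> \<le> L\<close>
    by (intro local_qgeod_gromov_le[OF H \<open>0 < \<delta>\<close> Q1 t1(1,2)]) (auto simp: w_def dist_commute abs_minus_commute)
  moreover have "287 * \<delta> \<le> gromov (\<gamma>1 a) (\<gamma>2 c) w"
    using dist_diff_le_gromov[of "\<gamma>1 a" w "\<gamma>2 c"] near_a t1(3) by (simp add: w_def)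
  ultimately have "gromov (\<gamma>2 c) (\<gamma>1 b) w \<le> 7 / 2 * \<delta>"
    using gromov_hyperbolic_transfer[OF H, of "\<gamma>1 a" "\<gamma>1 b" w "5 / 2 * \<delta>" "\<gamma>2 c"] \<open>0 < \<delta>\<close>
    by simp
  moreover have "387 * \<delta> \<le> gromov (\<gamma>1 b) (\<gamma>2 e) w"
    using dist_diff_le_gromov[of "\<gamma>1 b" w "\<gamma>2 e"] near_b far_b by (simp add: dist_commute)
  ultimately have "gromov (\<gamma>2 c) (\<gamma>2 e) w \<le> 9 / 2 * \<delta>"
    using gromov_hyperbolic_transfer[OF H, of "\<gamma>1 b" "\<gamma>2 c" w "7 / 2 * \<delta>" "\<gamma>2 e"] \<open>0 < \<delta>\<close>
    by (simp add: gromov_commute)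
  moreover have "9 / 2 * \<delta> + 250 * \<delta> \<le> dist (\<gamma>2 c) w" "9 / 2 * \<delta> + 250 * \<delta> \<le> dist (\<gamma>2 e) w"
    using dist_triangle[of "\<gamma>1 a" w "\<gamma>2 c"] dist_triangle[of "\<gamma>1 b" w "\<gamma>2 e"]
      near_a near_b far_b t1(3) \<open>0 < \<delta>\<close> by (simp_all add: w_def dist_commute)
  ultimately obtain t where "dist w (\<gamma>2 t) \<le> 9 / 2 * \<delta> + 7 * \<delta>"
    using local_qgeod_near_point[OF H \<open>0 < \<delta>\<close> Q2] by blast
  then show ?thesis
    using that t1(3) unfolding w_def by simp
qed

lemma gromov_boundary_gromov_large:
  assumes H: "gromov_hyperbolic (UNIV :: 'a::metric_space set) \<delta>"
    and "\<zeta> \<in> gromov_boundary" and "y \<in> \<zeta>" and "y' \<in> \<zeta>"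
  shows "eventually (\<lambda>n. M \<le> gromov (y n) (y' n) (b :: 'a)) sequentially"
proof -
  obtain x where "\<zeta> = {y. conv_infty y \<and> seq_rel x y}"
    using assms(2) unfolding gromov_boundary_def by blast
  then have "seq_rel x y" "seq_rel x y'"
    using assms(3,4) by auto
  then obtain N1 N2 where
    "\<And>n m. N1 \<le> n \<Longrightarrow> N1 \<le> m \<Longrightarrow> M + \<delta> \<le> gromov (x n) (y m) b"
    "\<And>n m. N2 \<le> n \<Longrightarrow> N2 \<le> m \<Longrightarrow> M + \<delta> \<le> gromov (x n) (y' m) b"
    unfolding seq_rel_def by meson
  then obtain N where
    N: "\<And>n m. N \<le> n \<Longrightarrow> N \<le> m \<Longrightarrow> M + \<delta> \<le> gromov (x n) (y m) b \<and> M + \<delta> \<le> gromov (x n) (y' m) b"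
    by (metis max.bounded_iff)
  have "M \<le> gromov (y n) (y' n) b" if "N \<le> n" for n
    using gromov_hyperbolicD[OF H, of "y n" "x N" b "y' n"] N[OF order_refl that]
    by (simp add: gromov_commute min_def split: if_splits)
  then show ?thesis
    unfolding eventually_sequentially by blast
qed

lemma gromov_boundary_dist_large:
  assumes "\<zeta> \<in> gromov_boundary" and "y \<in> \<zeta>"
  shows "eventually (\<lambda>n. M \<le> dist (y n) (b :: 'a::metric_space)) sequentially"
proof -
  have "conv_infty y"
    using assms unfolding gromov_boundary_def by blast
  then obtain N where "\<And>n m. N \<le> n \<Longrightarrow> N \<le> m \<Longrightarrow> M \<le> gromov (y n) (y m) b"
    unfolding conv_infty_def by blast
  moreover have "gromov (y n) (y n) b = dist (y n) b" for n
    by (simp add: gromov_def)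
  ultimately show ?thesis
    unfolding eventually_sequentially by metis
qed

lemma tends_bdry_top_nat: "tends_bdry_top \<gamma> \<eta> \<Longrightarrow> (\<lambda>n. \<gamma> (real n)) \<in> \<eta>"
  unfolding tends_bdry_top_def using filterlim_real_sequentially by blast

lemma tends_bdry_bot_nat: "tends_bdry_bot \<gamma> \<xi> \<Longrightarrow> (\<lambda>n. \<gamma> (- real n)) \<in> \<xi>"
  unfolding tends_bdry_bot_def filterlim_uminus_at_bot
  using filterlim_real_sequentially by fastforce

lemma local_qgeod_near_same_ends:
  fixes \<gamma> \<gamma>' :: "real \<Rightarrow> 'a::metric_space"
  assumes H: "gromov_hyperbolic (UNIV :: 'a set) \<delta>" and "0 < \<delta>"
    and Q: "local_qgeod (1000 * \<delta>) 1 \<delta> \<gamma>" and Q': "local_qgeod (1000 * \<delta>) 1 \<delta> \<gamma>'"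
    and \<zeta>: "\<zeta> \<in> gromov_boundary" "\<zeta>' \<in> gromov_boundary"
    and "(\<lambda>n. \<gamma>' (real n)) \<in> \<zeta>" "(\<lambda>n. \<gamma> (p n)) \<in> \<zeta>"
    and "(\<lambda>n. \<gamma>' (- real n)) \<in> \<zeta>'" "(\<lambda>n. \<gamma> (q n)) \<in> \<zeta>'"
  shows "\<exists>t. dist (\<gamma>' s) (\<gamma> t) \<le> 23 / 2 * \<delta>"
proof -
  define z where "z = \<gamma>' s"
  obtain N :: nat where "\<bar>s\<bar> + 250 * \<delta> \<le> N"
    using real_arch_simple by blast
  then have "eventually (\<lambda>n. \<bar>s\<bar> + 250 * \<delta> \<le> real n) sequentially"
    unfolding eventually_sequentially by (meson of_nat_le_iff order_trans)
  then have "eventually (\<lambda>n. \<bar>s\<bar> + 250 * \<delta> \<le> real n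
      \<and> 100 * \<delta> \<le> gromov (\<gamma>' (real n)) (\<gamma> (p n)) z
      \<and> 100 * \<delta> \<le> gromov (\<gamma>' (- real n)) (\<gamma> (q n)) z
      \<and> 255 * \<delta> \<le> dist (\<gamma> (p n)) z \<and> 255 * \<delta> \<le> dist (\<gamma> (q n)) z) sequentially"
    by (intro eventually_conj gromov_boundary_gromov_large[OF H \<zeta>(1) assms(7,8), of "100 * \<delta>" z]
        gromov_boundary_gromov_large[OF H \<zeta>(2) assms(9,10), of "100 * \<delta>" z]
        gromov_boundary_dist_large[OF \<zeta>(1) assms(8), of "255 * \<delta>" z]
        gromov_boundary_dist_large[OF \<zeta>(2) assms(10), of "255 * \<delta>" z])
  then obtain n where n: "\<bar>s\<bar> + 250 * \<delta> \<le> real n"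
    "100 * \<delta> \<le> gromov (\<gamma>' (real n)) (\<gamma> (p n)) z"
    "100 * \<delta> \<le> gromov (\<gamma>' (- real n)) (\<gamma> (q n)) z"
    "255 * \<delta> \<le> dist (\<gamma> (p n)) z" "255 * \<delta> \<le> dist (\<gamma> (q n)) z"
    unfolding eventually_sequentially by blast
  have "gromov (\<gamma>' (- real n)) (\<gamma>' (real n)) z \<le> 5 / 2 * \<delta>"
    unfolding z_def using n(1) \<open>0 < \<delta>\<close>
    by (intro local_qgeod_gromov_le[OF H \<open>0 < \<delta>\<close> Q']) auto
  then have "gromov (\<gamma> (q n)) (\<gamma>' (real n)) z \<le> 7 / 2 * \<delta>"
    using gromov_hyperbolic_transfer[OF H, of _ _ z _ "\<gamma> (q n)"] n(3) \<open>0 < \<delta>\<close> by fastforce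
  then have "gromov (\<gamma> (p n)) (\<gamma> (q n)) z \<le> 9 / 2 * \<delta>"
    using gromov_hyperbolic_transfer[OF H, of "\<gamma>' (real n)" "\<gamma> (q n)" z "7 / 2 * \<delta>" "\<gamma> (p n)"]
      n(2) \<open>0 < \<delta>\<close> by (simp add: gromov_commute)
  then have "\<exists>t. dist z (\<gamma> t) \<le> 9 / 2 * \<delta> + 7 * \<delta>"
    by (rule local_qgeod_near_point[OF H \<open>0 < \<delta>\<close> Q]) (use n(4,5) \<open>0 < \<delta>\<close> in auto)
  then show ?thesis
    unfolding z_def by simp
qed

definition qgeod_axis :: "('g \<Rightarrow> 'a::metric_space \<Rightarrow> 'a) \<Rightarrow> real \<Rightarrow> 'g set \<Rightarrow> (real \<Rightarrow> 'a) \<Rightarrow> bool" where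
  "qgeod_axis act \<delta> H \<gamma> \<longleftrightarrow> (\<exists>\<xi> \<eta>. limit_set act H = {\<xi>, \<eta>} \<and> \<xi> \<noteq> \<eta> \<and>
     local_qgeod (1000 * \<delta>) 1 \<delta> \<gamma> \<and> tends_bdry_bot \<gamma> \<xi> \<and> tends_bdry_top \<gamma> \<eta>)"

lemma qgeod_axis_local_qgeod: "qgeod_axis act \<delta> H \<gamma> \<Longrightarrow> local_qgeod (1000 * \<delta>) 1 \<delta> \<gamma>"
  unfolding qgeod_axis_def by blast

lemma C_H_iff_axis: "x \<in> C_H act \<delta> H \<longleftrightarrow> (\<exists>\<gamma> t. qgeod_axis act \<delta> H \<gamma> \<and> dist x (\<gamma> t) < 20 * \<delta>)"
  unfolding C_H_def qgeod_axis_def by blast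

lemma C_H_delta_pos: "x \<in> C_H act \<delta> H \<Longrightarrow> 0 < \<delta>"
proof -
  assume "x \<in> C_H act \<delta> H"
  then obtain \<gamma> and t :: real where "dist x (\<gamma> t) < 20 * \<delta>"
    unfolding C_H_iff_axis by blast
  then show "0 < \<delta>"
    using zero_le_dist[of x "\<gamma> t"] by linarith
qed

lemma qgeod_axes_close:
  fixes \<gamma> \<gamma>' :: "real \<Rightarrow> 'a::metric_space"
  assumes H: "gromov_hyperbolic (UNIV :: 'a set) \<delta>" and "0 < \<delta>"
    and "qgeod_axis act \<delta> K \<gamma>" and "qgeod_axis act \<delta> K \<gamma>'"
  shows "\<exists>t. dist (\<gamma>' s) (\<gamma> t) \<le> 23 / 2 * \<delta>"
proof -
  obtain \<xi> \<eta> where ends: "limit_set act K = {\<xi>, \<eta>}" "\<xi> \<noteq> \<eta>"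
    and Q: "local_qgeod (1000 * \<delta>) 1 \<delta> \<gamma>"
    and rays: "(\<lambda>n. \<gamma> (- real n)) \<in> \<xi>" "(\<lambda>n. \<gamma> (real n)) \<in> \<eta>"
    using assms(3) tends_bdry_bot_nat tends_bdry_top_nat unfolding qgeod_axis_def by metis
  obtain \<xi>' \<eta>' where ends': "limit_set act K = {\<xi>', \<eta>'}" "\<xi>' \<noteq> \<eta>'"
    and Q': "local_qgeod (1000 * \<delta>) 1 \<delta> \<gamma>'"
    and rays': "(\<lambda>n. \<gamma>' (- real n)) \<in> \<xi>'" "(\<lambda>n. \<gamma>' (real n)) \<in> \<eta>'"
    using assms(4) tends_bdry_bot_nat tends_bdry_top_nat unfolding qgeod_axis_def by metis
  have bdry: "\<xi> \<in> gromov_boundary" "\<eta> \<in> gromov_boundary"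
    using ends(1) unfolding limit_set_def by auto
  from ends ends' consider "\<xi>' = \<xi>" "\<eta>' = \<eta>" | "\<xi>' = \<eta>" "\<eta>' = \<xi>"
    by (auto simp: doubleton_eq_iff)
  then show ?thesis
  proof cases
    case 1
    then show ?thesis
      using local_qgeod_near_same_ends[OF H \<open>0 < \<delta>\<close> Q Q' bdry(2,1)] rays rays' by simp
  next
    case 2
    then show ?thesis
      using local_qgeod_near_same_ends[OF H \<open>0 < \<delta>\<close> Q Q' bdry, where p = "\<lambda>n. - real n" and q = "\<lambda>n. real n"] rays rays'
      by simp
  qed
qed

lemma C_H_near_axis:
  fixes act :: "'g \<Rightarrow> 'a::metric_space \<Rightarrow> 'a"
  assumes H: "gromov_hyperbolic (UNIV :: 'a set) \<delta>"
    and "y \<in> C_H act \<delta> K" and "qgeod_axis act \<delta> K \<gamma>"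
  obtains t where "dist y (\<gamma> t) < 63 / 2 * \<delta>"
proof -
  obtain \<gamma>' s where "qgeod_axis act \<delta> K \<gamma>'" and near: "dist y (\<gamma>' s) < 20 * \<delta>"
    using assms(2) unfolding C_H_iff_axis by blast
  then obtain t where "dist (\<gamma>' s) (\<gamma> t) \<le> 23 / 2 * \<delta>"
    using qgeod_axes_close[OF H C_H_delta_pos[OF assms(2)] assms(3)] by blast
  then show ?thesis
    using that[of t] near dist_triangle[of y "\<gamma> t" "\<gamma>' s"] by linarith
qed

lemma qgeod_axes_overlap_long:
  fixes act :: "'g \<Rightarrow> 'a::metric_space \<Rightarrow> 'a"
  assumes H: "gromov_hyperbolic (UNIV :: 'a set) \<delta>" and "0 < \<delta>"
    and axes: "qgeod_axis act \<delta> K1 \<gamma>1" "qgeod_axis act \<delta> K2 \<gamma>2"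
    and near_a: "dist (\<gamma>1 a) (\<gamma>2 c) \<le> L - 337 * \<delta>" and near_b: "dist (\<gamma>1 b) (\<gamma>2 e) \<le> L - 337 * \<delta>"
    and "400 * \<delta> \<le> L" and "0 \<le> D" and far: "D + 2 * L + 160 * \<delta> < dist (\<gamma>1 a) (\<gamma>1 b)"
  obtains z z' where "z \<in> C_H act \<delta> K1 \<inter> C_H act \<delta> K2" "z' \<in> C_H act \<delta> K1 \<inter> C_H act \<delta> K2"
    and "D < dist z z'"
proof -
  note Q = axes[THEN qgeod_axis_local_qgeod]
  obtain t1 t where t1: "dist (\<gamma>1 a) (\<gamma>1 t1) = L - 50 * \<delta>" "dist (\<gamma>1 t1) (\<gamma>2 t) \<le> 23 / 2 * \<delta>"
    using local_qgeod_fellow_travel[OF H \<open>0 < \<delta>\<close> Q near_a near_b _ \<open>400 * \<delta> \<le> L\<close>]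
      far \<open>0 \<le> D\<close> \<open>0 < \<delta>\<close> by auto
  obtain t2 t' where t2: "dist (\<gamma>1 b) (\<gamma>1 t2) = L - 50 * \<delta>" "dist (\<gamma>1 t2) (\<gamma>2 t') \<le> 23 / 2 * \<delta>"
    using local_qgeod_fellow_travel[OF H \<open>0 < \<delta>\<close> Q near_b near_a _ \<open>400 * \<delta> \<le> L\<close>]
      far \<open>0 \<le> D\<close> \<open>0 < \<delta>\<close> by (auto simp: dist_commute)
  have "\<gamma>1 s \<in> C_H act \<delta> K1" for s
    using axes(1) \<open>0 < \<delta>\<close> unfolding C_H_iff_axis by (metis dist_self mult_pos_pos zero_less_numeral)
  moreover have "\<gamma>1 t1 \<in> C_H act \<delta> K2"
    unfolding C_H_iff_axis using axes(2) t1(2) \<open>0 < \<delta>\<close> by (intro exI[of _ \<gamma>2] exI[of _ t]) simp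
  moreover have "\<gamma>1 t2 \<in> C_H act \<delta> K2"
    unfolding C_H_iff_axis using axes(2) t2(2) \<open>0 < \<delta>\<close> by (intro exI[of _ \<gamma>2] exI[of _ t']) simp
  moreover have "D < dist (\<gamma>1 t1) (\<gamma>1 t2)"
    using dist_triangle[of "\<gamma>1 a" "\<gamma>1 b" "\<gamma>1 t1"] dist_triangle[of "\<gamma>1 t1" "\<gamma>1 b" "\<gamma>1 t2"]
      t1(1) t2(1) far \<open>0 < \<delta>\<close> by (simp add: dist_commute)
  ultimately show ?thesis
    using that by blast
qed

lemma C_H_overlap_long:
  fixes act :: "'g \<Rightarrow> 'a::metric_space \<Rightarrow> 'a"
  assumes H: "gromov_hyperbolic (UNIV :: 'a set) \<delta>"
    and y: "y0 \<in> C_H act \<delta> K1" "yn \<in> C_H act \<delta> K1" "y0' \<in> C_H act \<delta> K2" "yn' \<in> C_H act \<delta> K2"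
    and close_p: "dist p y0 \<le> L / 2 - 200 * \<delta>" "dist p y0' \<le> L / 2 - 200 * \<delta>"
    and close_x: "dist x yn \<le> L / 2 - 200 * \<delta>" "dist x yn' \<le> L / 2 - 200 * \<delta>"
    and "0 \<le> D" and long: "D + 2 * L + 223 * \<delta> < dist y0 yn"
  obtains z z' where "z \<in> C_H act \<delta> K1 \<inter> C_H act \<delta> K2" "z' \<in> C_H act \<delta> K1 \<inter> C_H act \<delta> K2"
    and "D < dist z z'"
proof -
  have "0 < \<delta>"
    using C_H_delta_pos[OF y(1)] .
  have "400 * \<delta> \<le> L"
    using close_p(1) zero_le_dist[of p y0] by linarith
  obtain \<gamma>1 \<gamma>2 where axes: "qgeod_axis act \<delta> K1 \<gamma>1" "qgeod_axis act \<delta> K2 \<gamma>2"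
    using y(1,3) unfolding C_H_iff_axis by blast
  obtain a b c e where near: "dist y0 (\<gamma>1 a) < 63 / 2 * \<delta>" "dist yn (\<gamma>1 b) < 63 / 2 * \<delta>"
    "dist y0' (\<gamma>2 c) < 63 / 2 * \<delta>" "dist yn' (\<gamma>2 e) < 63 / 2 * \<delta>"
    by (metis C_H_near_axis[OF H] y axes)
  have "dist (\<gamma>1 a) (\<gamma>2 c) \<le> dist y0 (\<gamma>1 a) + dist p y0 + dist p y0' + dist y0' (\<gamma>2 c)"
    using dist_triangle[of "\<gamma>1 a" "\<gamma>2 c" y0] dist_triangle[of y0 "\<gamma>2 c" p]
      dist_triangle[of p "\<gamma>2 c" y0'] by (simp add: dist_commute)
  moreover have "dist (\<gamma>1 b) (\<gamma>2 e) \<le> dist yn (\<gamma>1 b) + dist x yn + dist x yn' + dist yn' (\<gamma>2 e)"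
    using dist_triangle[of "\<gamma>1 b" "\<gamma>2 e" yn] dist_triangle[of yn "\<gamma>2 e" x]
      dist_triangle[of x "\<gamma>2 e" yn'] by (simp add: dist_commute)
  moreover have "dist y0 yn \<le> dist y0 (\<gamma>1 a) + dist (\<gamma>1 a) (\<gamma>1 b) + dist yn (\<gamma>1 b)"
    using dist_triangle[of y0 yn "\<gamma>1 a"] dist_triangle[of "\<gamma>1 a" yn "\<gamma>1 b"]
    by (simp add: dist_commute)
  ultimately have "dist (\<gamma>1 a) (\<gamma>2 c) \<le> L - 337 * \<delta>" "dist (\<gamma>1 b) (\<gamma>2 e) \<le> L - 337 * \<delta>"
    "D + 2 * L + 160 * \<delta> < dist (\<gamma>1 a) (\<gamma>1 b)"
    using close_p close_x long near by linarith+
  then show ?thesis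
    using qgeod_axes_overlap_long[OF H \<open>0 < \<delta>\<close> axes _ _ \<open>400 * \<delta> \<le> L\<close> \<open>0 \<le> D\<close>] that by blast
qed

lemma isometric_action_inv_displacement:
  assumes "isometric_action G act" and "g \<in> carrier G"
  shows "dist (act (inv\<^bsub>G\<^esub> g) p) p = dist (act g p) p"
proof -
  have G: "group G"
    using assms(1) unfolding isometric_action_def by blast
  have "act g (act (inv\<^bsub>G\<^esub> g) p) = act (g \<otimes>\<^bsub>G\<^esub> inv\<^bsub>G\<^esub> g) p"
    using assms group.inv_closed[OF G] unfolding isometric_action_def by auto
  also have "\<dots> = p"
    using assms group.r_inv[OF G] unfolding isometric_action_def by auto
  finally have "dist (act (inv\<^bsub>G\<^esub> g) p) p = dist p (act g p)"
    using assms unfolding isometric_action_def by metis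
  then show ?thesis
    by (simp add: dist_commute)
qed

lemma shortening_word_projections:
  assumes act: "isometric_action G act" and "U \<subseteq> carrier G"
    and letters: "set w \<subseteq> U \<union> m_inv G ` U" and L: "\<forall>u\<in>U. dist (act u p) p \<le> L"
    and "shortening_word G act \<delta> \<alpha> \<tau> p w Y"
  obtains y0 yn where "y0 \<in> Y" "yn \<in> Y" "\<tau> < dist y0 yn"
    "dist p y0 \<le> L / 2 - \<alpha>" "dist (act (word_elem G w) p) yn \<le> L / 2 - \<alpha>"
proof -
  have letter_le: "dist (act u p) p \<le> L" if "u \<in> set w" for u
    using that letters L isometric_action_inv_displacement[OF act] \<open>U \<subseteq> carrier G\<close> by fastforce
  obtain y0 yn where "w \<noteq> []" and y: "y0 \<in> Y" "yn \<in> Y" "\<tau> < dist y0 yn"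
    and "dist p y0 \<le> dist (act (hd w) p) p / 2 - \<alpha>"
    and "dist (act (word_elem G w) p) yn \<le> dist (act (last w) p) p / 2 - \<alpha>"
    using assms(5) unfolding shortening_word_def is_projection_def by blast
  moreover note letter_le[OF hd_in_set[OF \<open>w \<noteq> []\<close>]] letter_le[OF last_in_set[OF \<open>w \<noteq> []\<close>]]
  ultimately have "dist p y0 \<le> L / 2 - \<alpha>" "dist (act (word_elem G w) p) yn \<le> L / 2 - \<alpha>"
    by linarith+
  with y that show ?thesis
    by blast
qed

lemma moving_family_C_H:
  assumes "loxodromic_moving_family G act \<delta> \<Delta>0 Q" and "(H, Y) \<in> Q"
  shows "Y = C_H act \<delta> H"
  using assms unfolding loxodromic_moving_family_def by fast

lemma moving_family_overlap_le:
  fixes act :: "'g \<Rightarrow> 'a::metric_space \<Rightarrow> 'a"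
  assumes "loxodromic_moving_family G act \<delta> \<Delta>0 Q"
    and "(H1, Y1) \<in> Q" and "(H2, Y2) \<in> Q" and "(H1, Y1) \<noteq> (H2, Y2)" and "0 \<le> \<delta>"
    and "x \<in> Y1 \<inter> Y2" and "y \<in> Y1 \<inter> Y2"
  shows "dist x y \<le> \<Delta>0"
proof -
  have "Y \<subseteq> nbhd (20 * \<delta>) Y" for Y :: "'a set"
    unfolding nbhd_def using \<open>0 \<le> \<delta>\<close> by force
  moreover have "\<forall>(H1, Y1)\<in>Q. \<forall>(H2, Y2)\<in>Q. (H1, Y1) \<noteq> (H2, Y2) \<longrightarrow>
      (\<forall>x\<in>nbhd (20 * \<delta>) Y1 \<inter> nbhd (20 * \<delta>) Y2. \<forall>y\<in>nbhd (20 * \<delta>) Y1 \<inter> nbhd (20 * \<delta>) Y2. dist x y \<le> \<Delta>0)"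
    using assms(1) unfolding loxodromic_moving_family_def by (rule conjunct2[THEN conjunct2])
  then have "\<forall>x\<in>nbhd (20 * \<delta>) Y1 \<inter> nbhd (20 * \<delta>) Y2. \<forall>y\<in>nbhd (20 * \<delta>) Y1 \<inter> nbhd (20 * \<delta>) Y2. dist x y \<le> \<Delta>0"
    using assms(2-4) by fastforce
  ultimately show ?thesis
    using assms(6,7) by blast
qed

theorem mainTheorem16:
  fixes G :: "('g, 'b) monoid_scheme"
    and act :: "'g \<Rightarrow> 'a::metric_space \<Rightarrow> 'a"
    and \<delta> L0 \<Delta>0 \<tau> :: real
    and U :: "'g set" and p :: 'a
    and Q :: "('g set \<times> 'a set) set"
    and H1 H2 :: "'g set" and Y1 Y2 :: "'a set"
    and w :: "'g list"
  assumes "isometric_action G act"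
    and "gromov_hyperbolic (UNIV :: 'a set) \<delta>"
    and "geodesic_space (UNIV :: 'a set)"
    and "L0 > 0" and "\<Delta>0 > 0"
    and "alpha_reduced G act \<delta> (200 * \<delta>) U p"
    and "\<exists>u0\<in>U. (\<forall>u\<in>U. dist (act u p) p \<le> dist (act u0 p) p) \<and>
                 0 < dist (act u0 p) p \<and> dist (act u0 p) p \<le> L0"
    and "loxodromic_moving_family G act \<delta> \<Delta>0 Q"
    and "\<tau> \<ge> \<Delta>0 + 2 * L0 + 223 * \<delta>"
    and "(H1, Y1) \<in> Q" and "(H2, Y2) \<in> Q"
    and "reduced_word G U w"
    and "shortening_word G act \<delta> (200 * \<delta>) \<tau> p w Y1"
    and "shortening_word G act \<delta> (200 * \<delta>) \<tau> p w Y2"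
  shows "(H1, Y1) = (H2, Y2)"
proof (rule ccontr)
  assume distinct: "(H1, Y1) \<noteq> (H2, Y2)"
  note H = assms(2) and Q = assms(8)
  have carrier: "U \<subseteq> carrier G" and letters: "set w \<subseteq> U \<union> m_inv G ` U"
    using assms(6,12) unfolding alpha_reduced_def reduced_word_def by auto
  obtain L where L: "\<forall>u\<in>U. dist (act u p) p \<le> L" "L \<le> L0"
    using assms(7) by blast
  note projections = shortening_word_projections[OF assms(1) carrier letters L(1)]
  obtain y0 yn where "y0 \<in> C_H act \<delta> H1" "yn \<in> C_H act \<delta> H1" "\<tau> < dist y0 yn"
    "dist p y0 \<le> L / 2 - 200 * \<delta>" "dist (act (word_elem G w) p) yn \<le> L / 2 - 200 * \<delta>"
    using projections[OF assms(13)] moving_family_C_H[OF Q assms(10)] by blast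
  moreover obtain y0' yn' where "y0' \<in> C_H act \<delta> H2" "yn' \<in> C_H act \<delta> H2"
    "dist p y0' \<le> L / 2 - 200 * \<delta>" "dist (act (word_elem G w) p) yn' \<le> L / 2 - 200 * \<delta>"
    using projections[OF assms(14)] moving_family_C_H[OF Q assms(11)] by blast
  moreover have "0 \<le> \<Delta>0" and "\<Delta>0 + 2 * L + 223 * \<delta> < dist y0 yn"
    using \<open>\<tau> < dist y0 yn\<close> assms(5,9) L(2) by linarith+
  ultimately obtain z z' where "z \<in> C_H act \<delta> H1 \<inter> C_H act \<delta> H2" "z' \<in> C_H act \<delta> H1 \<inter> C_H act \<delta> H2"
    and "\<Delta>0 < dist z z'"
    using C_H_overlap_long[OF H] by blast
  moreover have "dist z z' \<le> \<Delta>0" if "z \<in> Y1 \<inter> Y2" "z' \<in> Y1 \<inter> Y2"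
    using moving_family_overlap_le[OF Q assms(10,11) distinct gromov_hyperbolic_delta_nonneg[OF H] that] .
  ultimately show False
    using moving_family_C_H[OF Q] assms(10,11) by fastforce
qed

end
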